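(* Let $q=3^k$ for some $k\ge 1$, and pick $a,b,c,d\in\mathbb{F}_q$ with $ac\ne 0$. Then $f(X):=X^9+aX^5+bX^3+cX^2+dX$ does not permute $\mathbb{F}_q$. *)

theory Defs
  imports Main
begin

end

theory Submission
  imports Defs "HOL-Computational_Algebra.Polynomial" "HOL-Computational_Algebra.Primes"
begin

(*
  By Hermite's criterion, if f permutes F_q then the sum of f(x)^t over F_q vanishes for
  0 < t < q - 1, i.e. the coefficients of f^t at X^(q-1), X^(2(q-1)), ... add up to zero;
  for t small enough only the coefficient of X^(q-1) remains.  In characteristic 3 the power
  f^(3^j) is f with all exponents multiplied by 3^j and all coefficients raised to the 3^j-th
  power, so when t has small base-3 digits, f^t is a product of such twists, and its
  coefficients just below q = 3^k can be computed level by level from the top: the exponent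
  q - D 3^j must be made up by the twists of level j and below, and only a deficit D divisible
  by 3 can be passed on to level j + 1.  For t = 2 + 3 + ... + 3^(k-2) a single chain survives
  and the coefficient of X^(q-1) is 2ab (k even) or 2c (k odd) times a power of a.  When k is
  even and b = 0, the exponent t = 1 + 3 + 2 * 9 + 27 + ... + 3^(k-2) gives 2 a^12 c^10 times
  a power of a instead.  The fields with 3 and 9 elements are settled by direct computation.
*)

section \<open>Power sums over finite fields and Hermite's criterion\<close>

lemma of_nat_card_UNIV_eq_0: "of_nat (card (UNIV :: 'a::{field,finite} set)) = (0::'a)"
proof -
  have "(\<Sum>x\<in>UNIV. x + 1) = (\<Sum>x\<in>UNIV. x :: 'a)"
    by (rule sum.reindex_bij_witness[of _ "\<lambda>x. x - 1" "\<lambda>x. x + 1"]) auto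
  then show ?thesis
    by (simp add: sum.distrib)
qed

lemma CHAR_eq_prime_if_card_eq_power:
  assumes "prime p" and "card (UNIV :: 'a::{field,finite} set) = p ^ k"
  shows "CHAR('a) = p"
proof -
  have "prime CHAR('a)"
    by (intro prime_CHAR_semidom finite_imp_CHAR_pos) simp
  moreover have "CHAR('a) dvd p ^ k"
    using of_nat_card_UNIV_eq_0[where 'a='a] unfolding of_nat_eq_0_iff_char_dvd assms(2) .
  ultimately show ?thesis
    using assms(1) by (blast intro: primes_dvd_imp_eq prime_dvd_power)
qed

lemma card_UNIV_field_ge_2: "card (UNIV :: 'a::{field,finite} set) \<ge> 2"
proof -
  have "card {0::'a, 1} \<le> card (UNIV :: 'a set)"
    by (rule card_mono) simp_all
  then show ?thesis by simp
qed

lemma field_power_card_minus_1_eq_1: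
  fixes x :: "'a::{field,finite}"
  assumes "x \<noteq> 0"
  shows "x ^ (card (UNIV :: 'a set) - 1) = 1"
proof -
  let ?U = "UNIV - {0::'a}"
  have "(\<Prod>y\<in>?U. x * y) = (\<Prod>y\<in>?U. y)"
    by (rule prod.reindex_bij_witness[of _ "\<lambda>y. y / x" "\<lambda>y. x * y"]) (use assms in auto)
  moreover have "(\<Prod>y\<in>?U. x * y) = x ^ card ?U * (\<Prod>y\<in>?U. y)"
    by (simp add: prod.distrib)
  moreover have "(\<Prod>y\<in>?U. y) \<noteq> 0" and "card ?U = card (UNIV :: 'a set) - 1"
    by (simp_all add: card_Diff_singleton)
  ultimately show ?thesis by simp
qed

lemma exists_power_ne_1:
  assumes "0 < r" and "r < card (UNIV :: 'a::{field,finite} set) - 1"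
  shows "\<exists>y::'a. y \<noteq> 0 \<and> y ^ r \<noteq> 1"
proof (rule ccontr)
  assume "\<not> ?thesis"
  then have roots: "UNIV - {0::'a} \<subseteq> {x. poly (monom 1 r - 1) x = 0}"
    by (auto simp: poly_monom)
  have "coeff (monom (1::'a) r - 1) r = 1"
    using assms(1) by simp
  then have nonzero: "monom (1::'a) r - 1 \<noteq> 0"
    by (metis coeff_0 one_neq_zero)
  have "card (UNIV - {0::'a}) \<le> card {x. poly (monom (1::'a) r - 1) x = 0}"
    using roots by (intro card_mono) simp_all
  also have "\<dots> \<le> degree (monom (1::'a) r - 1)"
    using nonzero by (rule card_poly_roots_bound)
  also have "\<dots> \<le> r"
    by (rule order.trans[OF degree_diff_le_max]) (simp add: degree_monom_eq)
  finally show False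
    using assms(2) by (simp add: card_Diff_singleton)
qed

lemma sum_UNIV_power_eq_0_if_not_dvd:
  assumes "\<not> (card (UNIV :: 'a::{field,finite} set) - 1) dvd m"
  shows "(\<Sum>x\<in>UNIV. x ^ m :: 'a) = 0"
proof -
  let ?N = "card (UNIV :: 'a set) - 1"
  have "0 < m mod ?N" "m mod ?N < ?N"
    using assms card_UNIV_field_ge_2[where 'a='a] by (simp_all add: dvd_eq_mod_eq_0)
  then obtain y :: 'a where y: "y \<noteq> 0" "y ^ (m mod ?N) \<noteq> 1"
    using exists_power_ne_1 by blast
  have "y ^ m = (y ^ ?N) ^ (m div ?N) * y ^ (m mod ?N)"
    unfolding power_mult[symmetric] power_add[symmetric] by simp
  then have y_m: "y ^ m = y ^ (m mod ?N)"
    using field_power_card_minus_1_eq_1[OF y(1)] by simp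
  have "(\<Sum>x\<in>UNIV. x ^ m) = (\<Sum>x\<in>UNIV. (y * x) ^ m)"
    by (rule sum.reindex_bij_betw[symmetric])
       (rule bij_betw_byWitness[where f'="\<lambda>x. x / y"], use y in auto)
  also have "\<dots> = y ^ m * (\<Sum>x\<in>UNIV. x ^ m)"
    by (simp add: power_mult_distrib sum_distrib_left)
  finally have "(1 - y ^ m) * (\<Sum>x\<in>UNIV. x ^ m) = 0"
    by (simp add: algebra_simps)
  then show ?thesis
    using y y_m by simp
qed

lemma sum_UNIV_power:
  "(\<Sum>x\<in>UNIV. x ^ m :: 'a::{field,finite}) =
     (if 0 < m \<and> (card (UNIV :: 'a set) - 1) dvd m then -1 else 0)"
proof -
  let ?N = "card (UNIV :: 'a set) - 1"
  consider "m = 0" | "0 < m" "?N dvd m" | "\<not> ?N dvd m"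
    by fastforce
  then show ?thesis
  proof cases
    case 1
    then show ?thesis
      using of_nat_card_UNIV_eq_0[where 'a='a] by simp
  next
    case 2
    have unit: "x ^ m = 1" if "x \<noteq> 0" for x :: 'a
    proof -
      obtain s where "m = ?N * s"
        using 2 by blast
      then show ?thesis
        using field_power_card_minus_1_eq_1[OF that] by (simp add: power_mult)
    qed
    have "(\<Sum>x\<in>UNIV. x ^ m :: 'a) = (\<Sum>x\<in>UNIV - {0}. x ^ m)"
      using 2 by (intro sum.mono_neutral_right) auto
    also have "\<dots> = (\<Sum>x\<in>UNIV - {0::'a}. 1)"
      using unit by (intro sum.cong) auto
    also have "\<dots> = of_nat (card (UNIV :: 'a set)) - 1"
      using card_UNIV_field_ge_2[where 'a='a] by (simp add: card_Diff_singleton of_nat_diff)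
    finally show ?thesis
      using 2 by (simp add: of_nat_card_UNIV_eq_0)
  next
    case 3
    then show ?thesis
      by (simp add: sum_UNIV_power_eq_0_if_not_dvd)
  qed
qed

lemma sum_UNIV_poly:
  fixes p :: "'a::{field,finite} poly"
  assumes "degree p < J * (card (UNIV :: 'a set) - 1)"
  shows "(\<Sum>x\<in>UNIV. poly p x) = - (\<Sum>j\<in>{1..<J}. coeff p (j * (card (UNIV :: 'a set) - 1)))"
proof -
  define N where "N = card (UNIV :: 'a set) - 1"
  have N: "N \<ge> 1"
    using card_UNIV_field_ge_2[where 'a='a] N_def by simp
  have poly_eq: "poly p x = (\<Sum>i<J * N. coeff p i * x ^ i)" for x
  proof -
    have "(\<Sum>i<J * N. coeff p i * x ^ i) = (\<Sum>i\<le>degree p. coeff p i * x ^ i)"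
      by (rule sum.mono_neutral_right) (use assms in \<open>auto simp: N_def coeff_eq_0\<close>)
    then show ?thesis by (simp add: poly_altdef)
  qed
  have multiples: "{i\<in>{..<J * N}. 0 < i \<and> N dvd i} = (\<lambda>j. j * N) ` {1..<J}"
  proof (intro set_eqI iffI)
    fix i assume "i \<in> {i\<in>{..<J * N}. 0 < i \<and> N dvd i}"
    then obtain j where "i = j * N" "j * N < J * N" "0 < j"
      by (auto elim!: dvdE simp: mult.commute)
    then show "i \<in> (\<lambda>j. j * N) ` {1..<J}"
      by auto
  next
    fix i assume "i \<in> (\<lambda>j. j * N) ` {1..<J}"
    then show "i \<in> {i\<in>{..<J * N}. 0 < i \<and> N dvd i}"
      using N by auto
  qed
  have "(\<Sum>x\<in>UNIV. poly p x) = (\<Sum>i<J * N. coeff p i * (\<Sum>x\<in>UNIV. x ^ i))"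
    by (simp add: poly_eq sum_distrib_left sum.swap[of _ UNIV])
  also have "\<dots> = (\<Sum>i<J * N. if 0 < i \<and> N dvd i then - coeff p i else 0)"
    by (intro sum.cong) (auto simp: sum_UNIV_power N_def)
  also have "\<dots> = (\<Sum>i\<in>{i\<in>{..<J * N}. 0 < i \<and> N dvd i}. - coeff p i)"
    by (rule sum.inter_filter[symmetric]) simp
  also have "\<dots> = (\<Sum>i\<in>(\<lambda>j. j * N) ` {1..<J}. - coeff p i)"
    by (simp only: multiples)
  also have "\<dots> = (\<Sum>j\<in>{1..<J}. - coeff p (j * N))"
    using N by (intro sum.reindex_cong[where l="\<lambda>j. j * N"]) (auto simp: inj_on_def)
  finally show ?thesis
    by (simp add: N_def sum_negf)
qed

lemma hermite_power_sum_eq_0: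
  fixes f :: "'a::{field,finite} \<Rightarrow> 'a"
  assumes "bij f" and "0 < t" and "t < card (UNIV :: 'a set) - 1"
  shows "(\<Sum>x\<in>UNIV. f x ^ t) = 0"
proof -
  have "(\<Sum>x\<in>UNIV. f x ^ t) = (\<Sum>y\<in>UNIV. y ^ t)"
    using sum.reindex_bij_betw[OF assms(1), of "\<lambda>y. y ^ t"] by simp
  also have "\<dots> = 0"
    using assms(2,3) by (auto simp: sum_UNIV_power dest: dvd_imp_le)
  finally show ?thesis .
qed

lemma hermite_coeff_sum_eq_0:
  fixes f :: "'a::{field,finite} \<Rightarrow> 'a" and p :: "'a poly"
  assumes "bij f" and "0 < t" and "t < card (UNIV :: 'a set) - 1"
    and "\<And>x. poly p x = f x ^ t"
    and "degree p < J * (card (UNIV :: 'a set) - 1)"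
  shows "(\<Sum>j\<in>{1..<J}. coeff p (j * (card (UNIV :: 'a set) - 1))) = 0"
  using hermite_power_sum_eq_0[OF assms(1-3)] sum_UNIV_poly[OF assms(5)] assms(4) by simp

section \<open>Frobenius twists of the nonic\<close>

definition nonic :: "'a::comm_ring_1 \<Rightarrow> 'a \<Rightarrow> 'a \<Rightarrow> 'a \<Rightarrow> 'a \<Rightarrow> 'a" where
  "nonic a b c d x = x ^ 9 + a * x ^ 5 + b * x ^ 3 + c * x ^ 2 + d * x"

definition nonic_twist :: "'a::comm_ring_1 \<Rightarrow> 'a \<Rightarrow> 'a \<Rightarrow> 'a \<Rightarrow> nat \<Rightarrow> 'a poly" where
  "nonic_twist a b c d j = monom 1 (9 * 3 ^ j) + monom (a ^ 3 ^ j) (5 * 3 ^ j)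
     + monom (b ^ 3 ^ j) (3 * 3 ^ j) + monom (c ^ 3 ^ j) (2 * 3 ^ j) + monom (d ^ 3 ^ j) (3 ^ j)"

lemma poly_nonic_twist:
  fixes a b c d x :: "'a::comm_ring_1"
  assumes "CHAR('a) = 3"
  shows "poly (nonic_twist a b c d j) x = nonic a b c d x ^ 3 ^ j"
proof -
  have "(y + z) ^ 3 ^ j = y ^ 3 ^ j + z ^ 3 ^ j" for y z :: 'a
    using assms by (intro freshmans_dream') simp_all
  then show ?thesis
    unfolding nonic_def nonic_twist_def
    by (simp add: poly_monom power_mult_distrib power_mult[symmetric] mult.commute)
qed

lemma degree_nonic_twist: "degree (nonic_twist a b c d j) \<le> 9 * 3 ^ j"
  unfolding nonic_twist_def
  by (intro degree_add_le order.trans[OF degree_monom_le]) auto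
section \<open>Coefficients just below a power of 3\<close>

text \<open>The deficit \<open>D\<close> below the target exponent \<open>R\<close> is counted in units of \<open>3 ^ j\<close>.\<close>
definition gap_coeff :: "nat \<Rightarrow> 'a::zero poly \<Rightarrow> nat \<Rightarrow> nat \<Rightarrow> 'a" where
  "gap_coeff R p j D = (if D * 3 ^ j \<le> R then coeff p (R - D * 3 ^ j) else 0)"

lemma gap_coeff_add: "gap_coeff R (p + q) j D = gap_coeff R p j D + gap_coeff R q j D"
  by (simp add: gap_coeff_def)

lemma gap_coeff_monom_mult:
  "gap_coeff R (monom c (e * 3 ^ j) * p) j D = c * gap_coeff R p j (D + e)"
proof -
  have distrib: "(D + e) * 3 ^ j = D * 3 ^ j + e * 3 ^ j"
    by (rule add_mult_distrib)
  show ?thesis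
    unfolding gap_coeff_def coeff_monom_mult distrib by (auto simp: diff_diff_left)
qed

lemma gap_coeff_1: "gap_coeff R 1 j D = (if D * 3 ^ j = R then 1 else 0)"
  by (auto simp: gap_coeff_def)

lemma gap_coeff_card: "0 < q \<Longrightarrow> gap_coeff (j * q) p 0 j = coeff p (j * (q - 1))"
  by (simp add: gap_coeff_def right_diff_distrib')

lemma gap_coeff_nonic_twist_mult:
  "gap_coeff R (nonic_twist a b c d j * p) j D =
     gap_coeff R p j (D + 9) + a ^ 3 ^ j * gap_coeff R p j (D + 5) + b ^ 3 ^ j * gap_coeff R p j (D + 3)
     + c ^ 3 ^ j * gap_coeff R p j (D + 2) + d ^ 3 ^ j * gap_coeff R p j (D + 1)"
proof -
  have unit_exp: "monom (d ^ 3 ^ j) (3 ^ j) = monom (d ^ 3 ^ j) (1 * 3 ^ j)"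
    by simp
  show ?thesis
    unfolding nonic_twist_def unit_exp distrib_right gap_coeff_add gap_coeff_monom_mult by simp
qed

lemma gap_coeff_nonic_twist:
  "gap_coeff R (nonic_twist a b c d j) j D =
     gap_coeff R 1 j (D + 9) + a ^ 3 ^ j * gap_coeff R 1 j (D + 5) + b ^ 3 ^ j * gap_coeff R 1 j (D + 3)
     + c ^ 3 ^ j * gap_coeff R 1 j (D + 2) + d ^ 3 ^ j * gap_coeff R 1 j (D + 1)"
  using gap_coeff_nonic_twist_mult[where p=1] by simp

definition supported_on_multiples :: "nat \<Rightarrow> 'a::zero poly \<Rightarrow> bool" where
  "supported_on_multiples M p \<longleftrightarrow> (\<forall>m. coeff p m \<noteq> 0 \<longrightarrow> M dvd m)"

lemma supported_on_multiples_mult: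
  fixes p q :: "'a::comm_semiring_1 poly"
  assumes "supported_on_multiples M p" and "supported_on_multiples M q"
  shows "supported_on_multiples M (p * q)"
  unfolding supported_on_multiples_def
proof (intro allI impI)
  fix m assume "coeff (p * q) m \<noteq> 0"
  then obtain i where "i \<le> m" and "coeff p i \<noteq> 0" and "coeff q (m - i) \<noteq> 0"
    unfolding coeff_mult by (auto elim!: sum.not_neutral_contains_not_neutral dest!: mult_not_zero)
  then have "M dvd i + (m - i)"
    using assms unfolding supported_on_multiples_def by (blast intro: dvd_add)
  with \<open>i \<le> m\<close> show "M dvd m"
    by simp
qed

lemma supported_on_multiples_1: "supported_on_multiples M 1"
  by (simp add: supported_on_multiples_def)

lemma supported_on_multiples_prod:
  "(\<And>i. i \<in> I \<Longrightarrow> supported_on_multiples M (f i)) \<Longrightarrow> supported_on_multiples M (prod f I)"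
  by (induction I rule: infinite_finite_induct)
     (simp_all add: supported_on_multiples_1 supported_on_multiples_mult)

lemma supported_on_multiples_add:
  "supported_on_multiples M p \<Longrightarrow> supported_on_multiples M q \<Longrightarrow> supported_on_multiples M (p + q)"
  unfolding supported_on_multiples_def by (metis add.right_neutral coeff_add)

lemma supported_on_multiples_monom: "M dvd n \<Longrightarrow> supported_on_multiples M (monom c n)"
  by (simp add: supported_on_multiples_def coeff_monom)

lemma supported_on_multiples_nonic_twist:
  assumes "i \<le> j"
  shows "supported_on_multiples (3 ^ i) (nonic_twist a b c d j)"
proof -
  have "3 ^ i dvd (3 ^ j :: nat)"
    using assms by (rule le_imp_power_dvd)
  then show ?thesis
    unfolding nonic_twist_def
    by (intro supported_on_multiples_add supported_on_multiples_monom; simp add: dvd_mult)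
qed

lemma gap_coeff_descend:
  assumes "supported_on_multiples (3 ^ Suc j) p" and "3 ^ Suc j dvd R"
  shows "gap_coeff R p j D = (if 3 dvd D then gap_coeff R p (Suc j) (D div 3) else 0)"
proof (cases "3 dvd D")
  case True
  then obtain D' where "D = 3 * D'" ..
  then show ?thesis
    by (simp add: gap_coeff_def mult_ac)
next
  case False
  have "coeff p (R - D * 3 ^ j) = 0" if "D * 3 ^ j \<le> R"
  proof (rule ccontr)
    assume "coeff p (R - D * 3 ^ j) \<noteq> 0"
    then have "3 ^ Suc j dvd R - D * 3 ^ j"
      using assms(1) unfolding supported_on_multiples_def by blast
    then have "3 ^ Suc j dvd R - (R - D * 3 ^ j)"
      using assms(2) by (rule dvd_diff_nat[rotated])
    then have "3 * 3 ^ j dvd D * 3 ^ j"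
      using that by simp
    with False show False
      by simp
  qed
  with False show ?thesis
    by (simp add: gap_coeff_def)
qed

definition twist_prod :: "'a::comm_ring_1 \<Rightarrow> 'a \<Rightarrow> 'a \<Rightarrow> 'a \<Rightarrow> nat \<Rightarrow> nat \<Rightarrow> 'a poly" where
  "twist_prod a b c d i n = (\<Prod>p\<in>{i..<n}. nonic_twist a b c d p)"

definition chain_weight :: "'a::comm_ring_1 \<Rightarrow> nat \<Rightarrow> nat \<Rightarrow> 'a" where
  "chain_weight a i n = (\<Prod>p\<in>{i..<n}. if odd (n - p) then a ^ 3 ^ p else 1)"

lemma twist_prod_eq_mult:
  "i < n \<Longrightarrow> twist_prod a b c d i n = nonic_twist a b c d i * twist_prod a b c d (Suc i) n"
  unfolding twist_prod_def by (simp add: prod.atLeast_Suc_lessThan)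

lemma chain_weight_eq_mult:
  "i < n \<Longrightarrow> chain_weight a i n = (if odd (n - i) then a ^ 3 ^ i else 1) * chain_weight a (Suc i) n"
  unfolding chain_weight_def by (simp add: prod.atLeast_Suc_lessThan)

lemma chain_weight_nonzero: "(a::'a::field) \<noteq> 0 \<Longrightarrow> chain_weight a i n \<noteq> 0"
  by (simp add: chain_weight_def)

lemma supported_on_multiples_twist_prod:
  "i \<le> j \<Longrightarrow> supported_on_multiples (3 ^ i) (twist_prod a b c d j n)"
  unfolding twist_prod_def
  by (rule supported_on_multiples_prod) (simp add: supported_on_multiples_nonic_twist)

lemma poly_twist_prod:
  fixes a b c d x :: "'a::comm_ring_1"
  assumes "CHAR('a) = 3"
  shows "poly (twist_prod a b c d i n) x = nonic a b c d x ^ (\<Sum>p\<in>{i..<n}. 3 ^ p)"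
  unfolding twist_prod_def poly_prod power_sum
  by (intro prod.cong refl poly_nonic_twist assms)

lemma two_mult_sum_power_3: "i \<le> n \<Longrightarrow> 2 * (\<Sum>p\<in>{i..<n}. 3 ^ p) + 3 ^ i = (3::nat) ^ n"
  by (induction n rule: dec_induct) simp_all

lemma degree_twist_prod:
  assumes "i \<le> n"
  shows "2 * degree (twist_prod a b c d i n) + 9 * 3 ^ i \<le> 9 * 3 ^ n"
proof -
  have "degree (twist_prod a b c d i n) \<le> (\<Sum>p\<in>{i..<n}. 9 * 3 ^ p)"
    unfolding twist_prod_def
    by (rule order.trans[OF degree_prod_sum_le]) (auto intro: sum_mono degree_nonic_twist)
  also have "\<dots> = 9 * (\<Sum>p\<in>{i..<n}. 3 ^ p)"
    by (simp add: sum_distrib_left)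
  finally show ?thesis
    using two_mult_sum_power_3[OF assms] by simp
qed

text \<open>
  In the induction step a deficit \<open>D\<close> at level \<open>i\<close> continues as the deficit \<open>(D + e) div 3\<close>
  at level \<open>i + 1\<close> when the monomial \<open>X ^ (e * 3 ^ i)\<close> of the twist is used; only
  \<open>3 + 9 = 3 * 4\<close> and \<open>4 + 5 = 3 * 3\<close> lead to the one deficit that survives above.
\<close>
lemma gap_coeff_twist_prod:
  assumes "i \<le> n" and "D \<in> {1, 2, 3, 4, 5}"
  shows "gap_coeff (3 ^ Suc n) (twist_prod a b c d i n) i D =
    (if D = (if even (n - i) then 3 else 4) then chain_weight a i n else 0)"
  using assms
proof (induction i arbitrary: D rule: inc_induct)
  case base
  then show ?case
    by (auto simp: twist_prod_def chain_weight_def gap_coeff_1)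
next
  case (step i)
  let ?P = "twist_prod a b c d (Suc i) n"
  have "even (n - i) \<longleftrightarrow> odd (n - Suc i)"
    using step.hyps by presburger
  then have upper: "gap_coeff (3 ^ Suc n) ?P (Suc i) D' =
      (if D' = (if even (n - i) then 4 else 3) then chain_weight a (Suc i) n else 0)"
    if "D' \<in> {1, 2, 3, 4, 5}" for D'
    using step.IH[OF that] by auto
  have descend: "gap_coeff (3 ^ Suc n) ?P i D' =
      (if 3 dvd D' then gap_coeff (3 ^ Suc n) ?P (Suc i) (D' div 3) else 0)" for D'
    using step.hyps
    by (intro gap_coeff_descend supported_on_multiples_twist_prod le_imp_power_dvd) simp_all
  show ?case
    unfolding twist_prod_eq_mult[OF step.hyps(2)] chain_weight_eq_mult[OF step.hyps(2)]
      gap_coeff_nonic_twist_mult descend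
    using step.prems by (elim insertE) (auto simp: upper simp del: One_nat_def power_Suc)
qed

lemma hermite_gap_coeff_sum_eq_0:
  fixes f :: "'a::{field,finite} \<Rightarrow> 'a" and p :: "'a poly"
  assumes "bij f" and "0 < t" and "t < card (UNIV :: 'a set) - 1"
    and "\<And>x. poly p x = f x ^ t"
    and "degree p < J * (card (UNIV :: 'a set) - 1)"
  shows "(\<Sum>j\<in>{1..<J}. gap_coeff (j * card (UNIV :: 'a set)) p 0 j) = 0"
proof -
  have "0 < card (UNIV :: 'a set)"
    using card_UNIV_field_ge_2[where 'a='a] by simp
  then show ?thesis
    using hermite_coeff_sum_eq_0[OF assms] by (simp add: gap_coeff_card)
qed

lemma two_neq_zero_if_CHAR_3: "CHAR('a::semiring_1) = 3 \<Longrightarrow> (2::'a) \<noteq> 0"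
  using of_nat_eq_0_iff_char_dvd[of 2, where 'a='a] by simp

lemma not_bij_nonic_card_3:
  fixes a b c d :: "'a::{field,finite}"
  assumes card: "card (UNIV :: 'a set) = 3" and "c \<noteq> 0"
  shows "\<not> bij (nonic a b c d)"
proof
  assume bij: "bij (nonic a b c d)"
  have "CHAR('a) = 3"
    using CHAR_eq_prime_if_card_eq_power[of 3 1] card by simp
  then have "(\<Sum>j\<in>{1..<5}. coeff (nonic_twist a b c d 0) (j * 2)) = 0"
    using hermite_coeff_sum_eq_0[OF bij, of 1 "nonic_twist a b c d 0" 5]
      degree_nonic_twist[of a b c d 0] poly_nonic_twist[of a b c d 0] card by simp
  moreover have "{1..<5::nat} = {1, 2, 3, 4}"
    by auto
  ultimately show False
    using assms(2) by (simp add: nonic_twist_def)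
qed

lemma gap_coeff_sums_card_9:
  fixes a b c d :: "'a::comm_ring_1"
  defines "F \<equiv> nonic_twist a b c d"
  shows "(\<Sum>j\<in>{1..<3}. gap_coeff (j * 9) (F 0 * F 0) 0 j) = 2 * a * b"
    and "b = 0 \<Longrightarrow> (\<Sum>j\<in>{1..<5}. gap_coeff (j * 9) (F 0 * F 1) 0 j) =
      c ^ 4 + a * d ^ 3 + a ^ 3 * d + a ^ 3 + a"
    and "b = 0 \<Longrightarrow> (\<Sum>j\<in>{1..<6}. gap_coeff (j * 9) (F 0 * (F 0 * F 1)) 0 j) =
      c ^ 3 * (a ^ 2 + (d + 1) ^ 2)"
proof -
  have descend: "gap_coeff R (F 1) 0 D = (if 3 dvd D then gap_coeff R (F 1) 1 (D div 3) else 0)"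
    if "3 dvd R" for R D
    using gap_coeff_descend[of 0 "F 1" R D] supported_on_multiples_nonic_twist[of 1 1 a b c d] that
    unfolding F_def by simp
  have sets: "{1..<3::nat} = {1, 2}" "{1..<5::nat} = {1, 2, 3, 4}" "{1..<6::nat} = {1, 2, 3, 4, 5}"
    by auto
  show "(\<Sum>j\<in>{1..<3}. gap_coeff (j * 9) (F 0 * F 0) 0 j) = 2 * a * b"
    unfolding sets F_def
    by (simp add: gap_coeff_nonic_twist_mult gap_coeff_nonic_twist gap_coeff_1 del: One_nat_def)
  show "(\<Sum>j\<in>{1..<5}. gap_coeff (j * 9) (F 0 * F 1) 0 j) = c ^ 4 + a * d ^ 3 + a ^ 3 * d + a ^ 3 + a"
    if "b = 0"
    unfolding sets F_def
    by (simp add: gap_coeff_nonic_twist_mult gap_coeff_nonic_twist descend[unfolded F_def]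
        gap_coeff_1 del: One_nat_def) (simp add: that algebra_simps power4_eq_xxxx power3_eq_cube)
  show "(\<Sum>j\<in>{1..<6}. gap_coeff (j * 9) (F 0 * (F 0 * F 1)) 0 j) = c ^ 3 * (a ^ 2 + (d + 1) ^ 2)"
    if "b = 0"
    unfolding sets F_def
    by (simp add: gap_coeff_nonic_twist_mult gap_coeff_nonic_twist descend[unfolded F_def]
        gap_coeff_1 del: One_nat_def) (simp add: that algebra_simps power2_eq_square power3_eq_cube)
qed

lemma not_bij_nonic_card_9_if_b_nonzero:
  fixes a b c d :: "'a::{field,finite}"
  assumes card: "card (UNIV :: 'a set) = 9" and "a \<noteq> 0" and "b \<noteq> 0"
  shows "\<not> bij (nonic a b c d)"
proof
  assume bij: "bij (nonic a b c d)"
  let ?F = "nonic_twist a b c d"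
  have char: "CHAR('a) = 3"
    using CHAR_eq_prime_if_card_eq_power[of 3 2] card by simp
  have "degree (?F 0 * ?F 0) < 3 * (card (UNIV :: 'a set) - 1)"
    using order.trans[OF degree_mult_le
        add_mono[OF degree_nonic_twist[of a b c d 0] degree_nonic_twist[of a b c d 0]]]
      card
    by simp
  then have "(\<Sum>j\<in>{1..<3}. gap_coeff (j * 9) (?F 0 * ?F 0) 0 j) = 0"
    using hermite_gap_coeff_sum_eq_0[OF bij, of 2 "?F 0 * ?F 0" 3] card poly_nonic_twist[OF char, of a b c d 0]
    by (simp add: power2_eq_square)
  then have "2 * a * b = 0"
    unfolding gap_coeff_sums_card_9(1) .
  then show False
    using assms(2,3) two_neq_zero_if_CHAR_3[OF char] by simp
qed

lemma not_bij_nonic_card_9_b0: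
  fixes a c d :: "'a::{field,finite}"
  assumes card: "card (UNIV :: 'a set) = 9" and "c \<noteq> 0"
  shows "\<not> bij (nonic a 0 c d)"
proof
  assume bij: "bij (nonic a 0 c d)"
  let ?F = "nonic_twist a 0 c d"
  have char: "CHAR('a) = 3"
    using CHAR_eq_prime_if_card_eq_power[of 3 2] card by simp
  have deg0: "degree (?F 0) \<le> 9" and deg1: "degree (?F 1) \<le> 27"
    using degree_nonic_twist[of a 0 c d 0] degree_nonic_twist[of a 0 c d 1] by simp_all
  have "poly (?F 0) x = nonic a 0 c d x" and "poly (?F 1) x = nonic a 0 c d x ^ 3" for x
    using poly_nonic_twist[OF char, of a 0 c d 0] poly_nonic_twist[OF char, of a 0 c d 1] by simp_all
  then have poly4: "poly (?F 0 * ?F 1) x = nonic a 0 c d x ^ 4"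
    and poly5: "poly (?F 0 * (?F 0 * ?F 1)) x = nonic a 0 c d x ^ 5" for x
    by (simp_all add: power_Suc[symmetric] del: power_Suc)
  have "degree (?F 0 * ?F 1) < 5 * (card (UNIV :: 'a set) - 1)"
    using order.trans[OF degree_mult_le add_mono[OF deg0 deg1]] card by simp
  then have "(\<Sum>j\<in>{1..<5}. gap_coeff (j * 9) (?F 0 * ?F 1) 0 j) = 0"
    using hermite_gap_coeff_sum_eq_0[OF bij, of 4 "?F 0 * ?F 1" 5] card poly4 by simp
  then have rel4: "c ^ 4 + a * d ^ 3 + a ^ 3 * d + a ^ 3 + a = 0"
    unfolding gap_coeff_sums_card_9(2)[OF refl] .
  have "degree (?F 0 * (?F 0 * ?F 1)) < 6 * (card (UNIV :: 'a set) - 1)"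
    using order.trans[OF degree_mult_le
        add_mono[OF deg0 order.trans[OF degree_mult_le add_mono[OF deg0 deg1]]]]
      card by simp
  then have "(\<Sum>j\<in>{1..<6}. gap_coeff (j * 9) (?F 0 * (?F 0 * ?F 1)) 0 j) = 0"
    using hermite_gap_coeff_sum_eq_0[OF bij, of 5 "?F 0 * (?F 0 * ?F 1)" 6] card poly5 by simp
  then have "c ^ 3 * (a ^ 2 + (d + 1) ^ 2) = 0"
    unfolding gap_coeff_sums_card_9(3)[OF refl] .
  then have rel5: "a ^ 2 + (d + 1) ^ 2 = 0"
    using assms(2) by simp
  have "c ^ 4 = (c ^ 4 + a * d ^ 3 + a ^ 3 * d + a ^ 3 + a) - a * (d + 1) * (a ^ 2 + (d + 1) ^ 2)
      + 3 * (a * d ^ 2 + a * d)"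
    by (simp add: algebra_simps power2_eq_square power3_eq_cube power4_eq_xxxx)
  also have "\<dots> = 0"
    using rel4 rel5 of_nat_CHAR[where 'a='a] char by simp
  finally show False
    using assms(2) by simp
qed

lemma gap_coeff_twist_square_mult_twist_prod:
  fixes a b c d :: "'a::comm_ring_1"
  assumes "2 \<le> n"
  shows "gap_coeff (3 ^ Suc n)
      (nonic_twist a b c d 0 * (nonic_twist a b c d 0 * twist_prod a b c d 1 n)) 0 1 =
    (if odd n then 2 * a * b else 2 * c) * chain_weight a 1 n"
proof -
  let ?U = "twist_prod a b c d 1 n"
  have descend:
      "gap_coeff (3 ^ Suc n) ?U 0 D = (if 3 dvd D then gap_coeff (3 ^ Suc n) ?U 1 (D div 3) else 0)"
    for D
    using gap_coeff_descend[of 0 ?U "3 ^ Suc n" D] supported_on_multiples_twist_prod[of 1 1 a b c d n]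
    by simp
  have upper:
      "gap_coeff (3 ^ Suc n) ?U 1 D = (if D = (if odd n then 3 else 4) then chain_weight a 1 n else 0)"
    if "D \<in> {1, 2, 3, 4, 5}" for D
  proof -
    have "even (n - 1) \<longleftrightarrow> odd n"
      using assms by presburger
    then show ?thesis
      using gap_coeff_twist_prod[of 1 n D a b c d] that assms by simp
  qed
  show ?thesis
    by (cases "odd n")
       (simp_all add: gap_coeff_nonic_twist_mult descend upper del: One_nat_def power_Suc)
qed

lemma degree_twist_square_mult_twist_prod:
  assumes "1 \<le> n"
  shows "2 * degree (nonic_twist a b c d 0 * (nonic_twist a b c d 0 * twist_prod a b c d 1 n))
    \<le> 9 * 3 ^ n + 9"
proof -
  have "degree (nonic_twist a b c d 0 * (nonic_twist a b c d 0 * twist_prod a b c d 1 n))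
      \<le> 9 + (9 + degree (twist_prod a b c d 1 n))"
    using degree_nonic_twist[of a b c d 0]
    by (intro order.trans[OF degree_mult_le] add_mono order.trans[OF degree_mult_le]) simp_all
  moreover have "2 * degree (twist_prod a b c d 1 n) + 27 \<le> 9 * 3 ^ n"
    using degree_twist_prod[of 1 n a b c d] assms by simp
  ultimately show ?thesis
    by simp
qed

lemma not_bij_nonic_card_ge_27:
  fixes a b c d :: "'a::{field,finite}"
  assumes card: "card (UNIV :: 'a set) = 3 ^ Suc n" and "2 \<le> n"
    and "a \<noteq> 0" and "(if odd n then b else c) \<noteq> 0"
  shows "\<not> bij (nonic a b c d)"
proof
  assume bij: "bij (nonic a b c d)"
  let ?P = "nonic_twist a b c d 0 * (nonic_twist a b c d 0 * twist_prod a b c d 1 n)"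
  define S where "S = (\<Sum>p\<in>{1..<n}. 3 ^ p :: nat)"
  have char: "CHAR('a) = 3"
    using CHAR_eq_prime_if_card_eq_power[of 3 "Suc n"] card by simp
  have geom: "2 * S + 3 = 3 ^ n"
    using two_mult_sum_power_3[of 1 n] assms(2) by (simp add: S_def)
  have "(3::nat) ^ 2 \<le> 3 ^ n"
    using assms(2) by (intro power_increasing) simp_all
  then have large: "9 \<le> (3::nat) ^ n"
    by simp
  have poly: "poly ?P x = nonic a b c d x ^ (2 + S)" for x
    by (simp add: poly_nonic_twist[OF char] poly_twist_prod[OF char] S_def power_add)
  have deg: "degree ?P < 2 * (card (UNIV :: 'a set) - 1)"
    using degree_twist_square_mult_twist_prod[of n a b c d] assms(2) card large by simp
  have t: "0 < 2 + S" "2 + S < card (UNIV :: 'a set) - 1"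
    using card geom large by simp_all
  have "(\<Sum>j\<in>{1..<2}. gap_coeff (j * card (UNIV :: 'a set)) ?P 0 j) = 0"
    by (rule hermite_gap_coeff_sum_eq_0[OF bij t poly deg])
  then have "gap_coeff (3 ^ Suc n) ?P 0 1 = 0"
    using card by (simp add: numeral_2_eq_2)
  then have "(if odd n then 2 * a * b else 2 * c) * chain_weight a 1 n = 0"
    unfolding gap_coeff_twist_square_mult_twist_prod[OF assms(2)] .
  then show False
    using assms(3,4) chain_weight_nonzero[OF assms(3)] two_neq_zero_if_CHAR_3[OF char]
    by (simp split: if_splits)
qed

lemma gap_coeff_b0_level_2:
  fixes a c d :: "'a::comm_ring_1" and n :: nat
  defines "F \<equiv> nonic_twist a 0 c d" and "R \<equiv> 3 ^ Suc n"
  assumes "3 \<le> n" and "odd n"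
  shows "gap_coeff R (F 2 * (F 2 * twist_prod a 0 c d 3 n)) 2 1 = 0"
    and "gap_coeff R (F 2 * (F 2 * twist_prod a 0 c d 3 n)) 2 2 = 2 * a ^ 9 * c ^ 9 * chain_weight a 3 n"
proof -
  let ?U = "twist_prod a 0 c d 3 n"
  have upper: "gap_coeff R ?U 3 D = (if D = 3 then chain_weight a 3 n else 0)" if "D \<in> {1, 2, 3, 4, 5}" for D
    using gap_coeff_twist_prod[of 3 n D a 0 c d] assms(3,4) that unfolding R_def by simp
  have "supported_on_multiples (3 ^ Suc 2) ?U"
    by (rule supported_on_multiples_twist_prod) simp
  moreover have "3 ^ Suc 2 dvd R"
    using assms(3) unfolding R_def by (intro le_imp_power_dvd) simp
  ultimately
  have descend:
    "gap_coeff R ?U 2 D = (if 3 dvd D then gap_coeff R ?U 3 (D div 3) else 0)" for D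
    using gap_coeff_descend[of 2 ?U R D] by simp
  show "gap_coeff R (F 2 * (F 2 * ?U)) 2 1 = 0"
    and "gap_coeff R (F 2 * (F 2 * ?U)) 2 2 = 2 * a ^ 9 * c ^ 9 * chain_weight a 3 n"
    unfolding F_def by (simp_all add: gap_coeff_nonic_twist_mult descend upper del: One_nat_def)
qed

lemma gap_coeff_b0_product:
  fixes a c d :: "'a::comm_ring_1"
  defines "F \<equiv> nonic_twist a 0 c d"
  assumes "3 \<le> n" and "odd n"
  shows "gap_coeff (3 ^ Suc n) (F 0 * (F 1 * (F 2 * (F 2 * twist_prod a 0 c d 3 n)))) 0 1 =
    2 * a ^ 12 * c ^ 10 * chain_weight a 3 n"
proof -
  define R where "R = (3::nat) ^ Suc n"
  define X2 where "X2 = F 2 * (F 2 * twist_prod a 0 c d 3 n)"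
  define X1 where "X1 = F 1 * X2"
  have dvd_R: "3 ^ Suc j dvd R" if "j \<le> 3" for j
    using assms(2) that unfolding R_def by (intro le_imp_power_dvd) simp
  have "supported_on_multiples (3 ^ Suc 1) X2"
    unfolding X2_def F_def
    by (intro supported_on_multiples_mult supported_on_multiples_nonic_twist supported_on_multiples_twist_prod)
       simp_all
  from gap_coeff_descend[OF this dvd_R] have descend_X2:
    "gap_coeff R X2 1 D = (if 3 dvd D then gap_coeff R X2 2 (D div 3) else 0)" for D
    by (simp add: numeral_2_eq_2)
  have X2: "gap_coeff R X2 2 1 = 0" "gap_coeff R X2 2 2 = 2 * a ^ 9 * c ^ 9 * chain_weight a 3 n"
    using gap_coeff_b0_level_2[OF assms(2,3)] unfolding R_def X2_def F_def by simp_all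
  have X1_1: "gap_coeff R X1 1 1 = a ^ 3 * (2 * a ^ 9 * c ^ 9 * chain_weight a 3 n)"
    and X1_2: "gap_coeff R X1 1 2 = 0"
    unfolding X1_def F_def by (simp_all add: gap_coeff_nonic_twist_mult descend_X2 X2 del: One_nat_def)
  have "supported_on_multiples (3 ^ Suc 0) X1"
    unfolding X1_def X2_def F_def
    by (intro supported_on_multiples_mult supported_on_multiples_nonic_twist supported_on_multiples_twist_prod)
       simp_all
  from gap_coeff_descend[OF this dvd_R] have descend_X1:
    "gap_coeff R X1 0 D = (if 3 dvd D then gap_coeff R X1 1 (D div 3) else 0)" for D
    by simp
  have "gap_coeff R (F 0 * X1) 0 1 = c * (a ^ 3 * (2 * a ^ 9 * c ^ 9 * chain_weight a 3 n))"
    unfolding F_def by (simp add: gap_coeff_nonic_twist_mult descend_X1 X1_1 X1_2 del: One_nat_def)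
  also have "\<dots> = 2 * a ^ 12 * c ^ 10 * chain_weight a 3 n"
    by (simp add: eval_nat_numeral mult_ac)
  finally show ?thesis
    unfolding R_def X1_def X2_def .
qed

lemma gap_coeff_b0_product_second_card_81:
  fixes a c d :: "'a::comm_ring_1"
  defines "F \<equiv> nonic_twist a 0 c d"
  shows "gap_coeff 162 (F 0 * (F 1 * (F 2 * (F 2 * twist_prod a 0 c d 3 3)))) 0 2 = 0"
proof -
  define X2 where "X2 = F 2 * F 2"
  define X1 where "X1 = F 1 * X2"
  have X2: "gap_coeff 162 X2 2 D = 0" if "D \<in> {1, 2}" for D
    using that unfolding X2_def F_def
    by (elim insertE) (simp_all add: gap_coeff_nonic_twist_mult gap_coeff_nonic_twist gap_coeff_1
        del: One_nat_def)
  have "supported_on_multiples (3 ^ Suc 1) X2"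
    unfolding X2_def F_def
    by (intro supported_on_multiples_mult supported_on_multiples_nonic_twist) simp_all
  from gap_coeff_descend[OF this, of 162] have descend_X2:
    "gap_coeff 162 X2 1 D = (if 3 dvd D then gap_coeff 162 X2 2 (D div 3) else 0)" for D
    by (simp add: numeral_2_eq_2)
  have X1: "gap_coeff 162 X1 1 1 = 0"
    unfolding X1_def F_def by (simp add: gap_coeff_nonic_twist_mult descend_X2 X2 del: One_nat_def)
  have "supported_on_multiples (3 ^ Suc 0) X1"
    unfolding X1_def X2_def F_def
    by (intro supported_on_multiples_mult supported_on_multiples_nonic_twist) simp_all
  from gap_coeff_descend[OF this, of 162] have descend_X1:
    "gap_coeff 162 X1 0 D = (if 3 dvd D then gap_coeff 162 X1 1 (D div 3) else 0)" for D
    by simp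
  have "gap_coeff 162 (F 0 * X1) 0 2 = 0"
    unfolding F_def by (simp add: gap_coeff_nonic_twist_mult descend_X1 X1 del: One_nat_def)
  then show ?thesis
    by (simp add: X1_def X2_def twist_prod_def)
qed

lemma degree_b0_product:
  fixes a c d :: "'a::comm_ring_1"
  defines "F \<equiv> nonic_twist a 0 c d"
  assumes "3 \<le> n"
  shows "2 * degree (F 0 * (F 1 * (F 2 * (F 2 * twist_prod a 0 c d 3 n)))) \<le> 9 * 3 ^ n + 153"
proof -
  have "degree (F 0 * (F 1 * (F 2 * (F 2 * twist_prod a 0 c d 3 n))))
      \<le> 9 + (27 + (81 + (81 + degree (twist_prod a 0 c d 3 n))))"
    using degree_nonic_twist[of a 0 c d 0] degree_nonic_twist[of a 0 c d 1] degree_nonic_twist[of a 0 c d 2]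
    unfolding F_def by (intro order.trans[OF degree_mult_le] add_mono order.refl) simp_all
  moreover have "2 * degree (twist_prod a 0 c d 3 n) + 243 \<le> 9 * 3 ^ n"
    using degree_twist_prod[of 3 n a 0 c d] assms(2) by simp
  ultimately show ?thesis
    by simp
qed

lemma poly_b0_product:
  fixes a c d x :: "'a::comm_ring_1"
  defines "F \<equiv> nonic_twist a 0 c d"
  assumes "CHAR('a) = 3"
  shows "poly (F 0 * (F 1 * (F 2 * (F 2 * twist_prod a 0 c d 3 n)))) x =
    nonic a 0 c d x ^ (22 + (\<Sum>p\<in>{3..<n}. 3 ^ p))"
proof -
  have "poly (F 0 * (F 1 * (F 2 * (F 2 * twist_prod a 0 c d 3 n)))) x =
      nonic a 0 c d x ^ (1 + (3 + (9 + (9 + (\<Sum>p\<in>{3..<n}. 3 ^ p)))))"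
    unfolding F_def poly_mult poly_twist_prod[OF assms(2)] poly_nonic_twist[OF assms(2)] power_add by simp
  then show ?thesis
    by simp
qed

lemma not_bij_nonic_b0_card_ge_81:
  fixes a c d :: "'a::{field,finite}"
  assumes card: "card (UNIV :: 'a set) = 3 ^ Suc n" and "3 \<le> n" and "odd n"
    and "a \<noteq> 0" and "c \<noteq> 0"
  shows "\<not> bij (nonic a 0 c d)"
proof
  assume bij: "bij (nonic a 0 c d)"
  let ?F = "nonic_twist a 0 c d"
  let ?P = "?F 0 * (?F 1 * (?F 2 * (?F 2 * twist_prod a 0 c d 3 n)))"
  define S where "S = (\<Sum>p\<in>{3..<n}. 3 ^ p :: nat)"
  have char: "CHAR('a) = 3"
    using CHAR_eq_prime_if_card_eq_power[of 3 "Suc n"] card by simp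
  have geom: "2 * S + 27 = 3 ^ n"
    using two_mult_sum_power_3[of 3 n] assms(2) by (simp add: S_def)
  note poly = poly_b0_product[OF char, of a c d n, folded S_def]
  have t: "0 < 22 + S" "22 + S < card (UNIV :: 'a set) - 1"
    using card geom by simp_all
  have top: "gap_coeff (3 ^ Suc n) ?P 0 1 \<noteq> 0"
    unfolding gap_coeff_b0_product[OF assms(2,3)]
    using assms(4,5) chain_weight_nonzero[OF assms(4)] two_neq_zero_if_CHAR_3[OF char] by simp
  note deg = degree_b0_product[OF assms(2), of a c d]
  show False
  proof (cases "n = 3")
    case True
    then have "degree ?P < 3 * (card (UNIV :: 'a set) - 1)"
      using deg card by simp
    from hermite_gap_coeff_sum_eq_0[OF bij t poly this]
    have "(\<Sum>j\<in>{1..<3}. gap_coeff (j * 3 ^ Suc n) ?P 0 j) = 0"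
      using card by simp
    moreover have "{1..<3::nat} = {1, 2}"
      by auto
    moreover have "gap_coeff (2 * 3 ^ Suc n) ?P 0 2 = 0"
      using gap_coeff_b0_product_second_card_81[of a c d] True by simp
    ultimately show False
      using top by simp
  next
    case False
    then have "(3::nat) ^ 5 \<le> 3 ^ n"
      using assms(2,3) by (intro power_increasing) presburger+
    then have "degree ?P < 2 * (card (UNIV :: 'a set) - 1)"
      using deg card by simp
    from hermite_gap_coeff_sum_eq_0[OF bij t poly this]
    have "gap_coeff (3 ^ Suc n) ?P 0 1 = 0"
      using card by (simp add: numeral_2_eq_2)
    then show False
      using top by simp
  qed
qed

lemma not_bij_nonic:
  fixes a b c d :: "'a::{field,finite}"
  assumes card: "card (UNIV :: 'a set) = 3 ^ Suc n" and a: "a \<noteq> 0" and c: "c \<noteq> 0"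
  shows "\<not> bij (nonic a b c d)"
proof -
  consider "n = 0" | "n = 1" "b \<noteq> 0" | "n = 1" "b = 0"
    | "2 \<le> n" "(if odd n then b else c) \<noteq> 0" | "3 \<le> n" "odd n" "b = 0"
  proof -
    have "n \<le> 1 \<or> 2 \<le> n \<and> (if odd n then b else c) \<noteq> 0 \<or> 3 \<le> n \<and> odd n \<and> b = 0"
      using c by (cases "odd n") (auto simp: not_le elim: oddE)
    then show ?thesis
      using that by (auto simp: le_Suc_eq)
  qed
  then show ?thesis
  proof cases
    case 1
    with card c show ?thesis
      by (intro not_bij_nonic_card_3) simp_all
  next
    case 2
    with card a show ?thesis
      by (intro not_bij_nonic_card_9_if_b_nonzero) simp_all
  next
    case 3
    with card c show ?thesis
      using not_bij_nonic_card_9_b0[of c a d] by simp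
  next
    case 4
    with card a show ?thesis
      by (intro not_bij_nonic_card_ge_27)
  next
    case 5
    with card a c show ?thesis
      using not_bij_nonic_b0_card_ge_81 by blast
  qed
qed

theorem proposition4p3:
  fixes a b c d :: "'a :: {field, finite}" and k :: nat
  assumes "k \<ge> 1" and "card (UNIV :: 'a set) = 3 ^ k" and "a * c \<noteq> 0"
  shows "\<not> bij (\<lambda>x::'a. x ^ 9 + a * x ^ 5 + b * x ^ 3 + c * x ^ 2 + d * x)"
proof -
  obtain n where "card (UNIV :: 'a set) = 3 ^ Suc n"
    using assms(1,2) by (cases k) simp_all
  moreover have "a \<noteq> 0" and "c \<noteq> 0"
    using assms(3) by simp_all
  ultimately have "\<not> bij (nonic a b c d)"
    by (rule not_bij_nonic)
  then show ?thesis
    by (simp add: nonic_def [abs_def])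
qed

end
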